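(* In the public goods model with $k\ge n$, for any $\alpha\in(0,1]$, any allocation that satisfies $\alpha$-Prop satisfies $\frac{\alpha}{n}$-RRS. This is tight: there is an instance with $n=2$ agents and an allocation satisfying Prop ($\alpha=1$) under which some agent $i$ receives exactly $\frac1n\mathrm{RRS}_i>0$.
   Context: Public goods model: agents $[n]$, goods $G=[m]$, integer $0\le k\le m$, nonnegative integer additive values $v_{ij}$, $v_i(S)=\sum_{j\in S}v_{ij}$; an allocation is $x\subseteq G$ with $|x|\le k$. $\mathrm{Prop}_i=\frac1n\max_{|y|\le k}v_i(y)$, $\mathrm{RRS}_i=\max_{|y|\le\lfloor k/n\rfloor}v_i(y)$. $x$ is $\beta$-Prop if $v_i(x)\ge\beta\,\mathrm{Prop}_i$ for all $i$, and $\beta$-RRS if $v_i(x)\ge\beta\,\mathrm{RRS}_i$ for all $i$. *)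

theory Defs
  imports Complex_Main
begin

definition val :: "(nat \<Rightarrow> nat \<Rightarrow> nat) \<Rightarrow> nat \<Rightarrow> nat set \<Rightarrow> nat" where
  "val v i S = (\<Sum>j\<in>S. v i j)"

definition is_alloc :: "nat \<Rightarrow> nat \<Rightarrow> nat set \<Rightarrow> bool" where
  "is_alloc m k x \<longleftrightarrow> x \<subseteq> {0..<m} \<and> card x \<le> k"

definition Prop :: "nat \<Rightarrow> nat \<Rightarrow> nat \<Rightarrow> (nat \<Rightarrow> nat \<Rightarrow> nat) \<Rightarrow> nat \<Rightarrow> real" where
  "Prop n m k v i = (1 / real n) * real (Max {val v i y | y. y \<subseteq> {0..<m} \<and> card y \<le> k})"

definition RRS :: "nat \<Rightarrow> nat \<Rightarrow> nat \<Rightarrow> (nat \<Rightarrow> nat \<Rightarrow> nat) \<Rightarrow> nat \<Rightarrow> real" where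
  "RRS n m k v i = real (Max {val v i y | y. y \<subseteq> {0..<m} \<and> card y \<le> k div n})"

definition is_beta_Prop :: "nat \<Rightarrow> nat \<Rightarrow> nat \<Rightarrow> (nat \<Rightarrow> nat \<Rightarrow> nat) \<Rightarrow> real \<Rightarrow> nat set \<Rightarrow> bool" where
  "is_beta_Prop n m k v \<beta> x \<longleftrightarrow> (\<forall>i<n. real (val v i x) \<ge> \<beta> * Prop n m k v i)"

definition is_beta_RRS :: "nat \<Rightarrow> nat \<Rightarrow> nat \<Rightarrow> (nat \<Rightarrow> nat \<Rightarrow> nat) \<Rightarrow> real \<Rightarrow> nat set \<Rightarrow> bool" where
  "is_beta_RRS n m k v \<beta> x \<longleftrightarrow> (\<forall>i<n. real (val v i x) \<ge> \<beta> * RRS n m k v i)"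

end

theory Submission
  imports Defs
begin

text \<open>A bundle of \<open>\<lfloor>k/n\<rfloor>\<close> goods is itself a feasible allocation of at most \<open>k\<close> goods, so
  \<open>RRS\<^sub>i \<le> n Prop\<^sub>i\<close> and hence \<open>\<alpha> Prop\<^sub>i \<ge> (\<alpha>/n) RRS\<^sub>i\<close>. For tightness take two agents and
  \<open>k = m = 4\<close>, where agent 0 values goods 0 and 1 at 1 each and agent 1 values nothing:
  then \<open>RRS\<^sub>0 = 2\<close> and \<open>Prop\<^sub>0 = 1\<close>, and the single good 0 gives agent 0 exactly \<open>RRS\<^sub>0 / 2\<close>.\<close>

lemma finite_bundle_vals: "finite {val v i y | y. y \<subseteq> {0..<m} \<and> card y \<le> c}"
proof -
  have "{val v i y | y. y \<subseteq> {0..<m} \<and> card y \<le> c} \<subseteq> val v i ` Pow {0..<m}"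
    by auto
  then show ?thesis
    by (rule finite_subset) simp
qed

lemma Max_bundle_vals_mono:
  assumes "c \<le> d"
  shows "Max {val v i y | y. y \<subseteq> {0..<m} \<and> card y \<le> c}
           \<le> Max {val v i y | y. y \<subseteq> {0..<m} \<and> card y \<le> d}"
proof (rule Max_mono[OF _ _ finite_bundle_vals])
  show "{val v i y | y. y \<subseteq> {0..<m} \<and> card y \<le> c} \<noteq> {}"
    by force
  show "{val v i y | y. y \<subseteq> {0..<m} \<and> card y \<le> c}
          \<subseteq> {val v i y | y. y \<subseteq> {0..<m} \<and> card y \<le> d}"
    using assms by force
qed

lemma RRS_le_n_Prop:
  assumes "0 < n"
  shows "RRS n m k v i \<le> real n * Prop n m k v i"
  using Max_bundle_vals_mono[of "k div n" k v i m] assms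
  unfolding RRS_def Prop_def by simp

lemma beta_Prop_imp_beta_RRS:
  assumes "0 < n" and "0 \<le> \<alpha>" and "is_beta_Prop n m k v \<alpha> x"
  shows "is_beta_RRS n m k v (\<alpha> / real n) x"
  unfolding is_beta_RRS_def
proof (intro allI impI)
  fix i assume "i < n"
  have "\<alpha> / real n * RRS n m k v i \<le> \<alpha> / real n * (real n * Prop n m k v i)"
    using RRS_le_n_Prop[OF \<open>0 < n\<close>] assms(2) by (intro mult_left_mono) auto
  also have "\<dots> = \<alpha> * Prop n m k v i"
    using \<open>0 < n\<close> by simp
  also have "\<dots> \<le> real (val v i x)"
    using assms(3) \<open>i < n\<close> unfolding is_beta_Prop_def by blast
  finally show "\<alpha> / real n * RRS n m k v i \<le> real (val v i x)" .
qed

lemma Max_bundle_vals_concentrated: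
  assumes "S \<subseteq> {0..<m}" and "card S \<le> c" and "\<And>j. j \<in> {0..<m} - S \<Longrightarrow> v i j = 0"
  shows "Max {val v i y | y. y \<subseteq> {0..<m} \<and> card y \<le> c} = val v i {0..<m}"
proof (rule Max_eqI[OF finite_bundle_vals])
  show "z \<le> val v i {0..<m}" if "z \<in> {val v i y | y. y \<subseteq> {0..<m} \<and> card y \<le> c}" for z
    using that unfolding val_def by (auto intro: sum_mono2)
  have "val v i S = val v i {0..<m}"
    unfolding val_def using assms(1,3) by (intro sum.mono_neutral_left) auto
  with assms(1,2) show "val v i {0..<m} \<in> {val v i y | y. y \<subseteq> {0..<m} \<and> card y \<le> c}"
    by (metis (mono_tags, lifting) mem_Collect_eq)
qed

definition tight_vals :: "nat \<Rightarrow> nat \<Rightarrow> nat" where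
  "tight_vals i j = (if i = 0 \<and> j < 2 then 1 else 0)"

lemma Max_bundle_tight_vals:
  assumes "2 \<le> c"
  shows "Max {val tight_vals i y | y. y \<subseteq> {0..<4} \<and> card y \<le> c} = (if i = 0 then 2 else 0)"
proof -
  have "Max {val tight_vals i y | y. y \<subseteq> {0..<4} \<and> card y \<le> c} = val tight_vals i {0..<4}"
    using assms by (intro Max_bundle_vals_concentrated[of "{0, 1}"]) (auto simp: tight_vals_def)
  also have "\<dots> = (if i = 0 then 2 else 0)"
    by (simp add: val_def tight_vals_def numeral_eq_Suc)
  finally show ?thesis .
qed

lemma tight_example:
  "is_alloc 4 4 {0} \<and> is_beta_Prop 2 4 4 tight_vals 1 {0} \<and>
   RRS 2 4 4 tight_vals 0 = 2 \<and> val tight_vals 0 {0} = 1"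
proof -
  have "val tight_vals i {0} = (if i = 0 then 1 else 0)" for i
    by (simp add: val_def tight_vals_def)
  then show ?thesis
    using Max_bundle_tight_vals[of 2] Max_bundle_tight_vals[of 4]
    by (auto simp: is_alloc_def is_beta_Prop_def Prop_def RRS_def)
qed

theorem lemma3:
  shows "(\<forall>(n::nat) (m::nat) (k::nat) v (\<alpha>::real) x.
            0 < n \<longrightarrow> n \<le> k \<longrightarrow> k \<le> m \<longrightarrow> 0 < \<alpha> \<longrightarrow> \<alpha> \<le> 1 \<longrightarrow>
            is_alloc m k x \<longrightarrow> is_beta_Prop n m k v \<alpha> x \<longrightarrow>
            is_beta_RRS n m k v (\<alpha> / real n) x)
       \<and> (\<exists>(m::nat) (k::nat) v x i.
            2 \<le> k \<and> k \<le> m \<and> is_alloc m k x \<and> is_beta_Prop 2 m k v 1 x \<and> i < 2 \<and>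
            RRS 2 m k v i > 0 \<and> real (val v i x) = RRS 2 m k v i / 2)"
proof
  show "\<forall>n m k v (\<alpha>::real) x.
          0 < n \<longrightarrow> n \<le> k \<longrightarrow> k \<le> m \<longrightarrow> 0 < \<alpha> \<longrightarrow> \<alpha> \<le> 1 \<longrightarrow>
          is_alloc m k x \<longrightarrow> is_beta_Prop n m k v \<alpha> x \<longrightarrow>
          is_beta_RRS n m k v (\<alpha> / real n) x"
    using beta_Prop_imp_beta_RRS by (meson less_imp_le)
  show "\<exists>m k v x i.
          2 \<le> k \<and> k \<le> m \<and> is_alloc m k x \<and> is_beta_Prop 2 m k v 1 x \<and> i < 2 \<and>
          RRS 2 m k v i > 0 \<and> real (val v i x) = RRS 2 m k v i / 2"
    using tight_example by (intro exI[of _ 4] exI[of _ tight_vals] exI[of _ "{0}"] exI[of _ 0]) simp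
qed

end
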